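(* Let $f$ satisfy (f1) and suppose $f_0=+\infty$ and $f_\infty=0$. Then for every $\lambda\in(0,+\infty)$, problem (MO) has two solutions $u^+$ and $u^-$ such that $u^+$ is positive and strictly concave in $(0,1)$ and $u^-$ is negative and strictly convex in $(0,1)$.
   Context: Let $N\ge 1$ be an integer and $f:\mathbb{R}\to\mathbb{R}$ continuous. For $\lambda\ge 0$, problem (MO) is: find $u\in C^2[0,1]$ with $\left((u'(r))^N\right)'=\lambda^N N r^{N-1} f(-u(r))$ for $0<r<1$ and $u'(0)=u(1)=0$. Condition (f1): $f\in C(\mathbb{R},\mathbb{R})$ and $f(s)s^N>0$ for all $s\neq0$. The quantities $f_0,f_\infty\in[0,+\infty]$ are defined by $f_0^N=\lim_{s\to0} f(s)/s^N$ and $f_\infty^N=\lim_{|s|\to+\infty} f(s)/s^N$ (limits assumed to exist in $[0,+\infty]$). *)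

theory Defs
  imports "HOL-Analysis.Analysis"
begin

definition strictly_convex_on :: "real set \<Rightarrow> (real \<Rightarrow> real) \<Rightarrow> bool" where
  "strictly_convex_on S u \<longleftrightarrow> convex S \<and>
     (\<forall>x\<in>S. \<forall>y\<in>S. \<forall>t::real. x \<noteq> y \<and> 0 < t \<and> t < 1 \<longrightarrow>
        u ((1 - t) * x + t * y) < (1 - t) * u x + t * u y)"

definition strictly_concave_on :: "real set \<Rightarrow> (real \<Rightarrow> real) \<Rightarrow> bool" where
  "strictly_concave_on S u \<longleftrightarrow> strictly_convex_on S (\<lambda>x. - u x)"

definition C2_on_unit :: "(real \<Rightarrow> real) \<Rightarrow> (real \<Rightarrow> real) \<Rightarrow> (real \<Rightarrow> real) \<Rightarrow> bool" where
  "C2_on_unit u u' u'' \<longleftrightarrow>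
     (\<forall>x\<in>{0..1}. (u has_real_derivative u' x) (at x within {0..1})) \<and>
     (\<forall>x\<in>{0..1}. (u' has_real_derivative u'' x) (at x within {0..1})) \<and>
     continuous_on {0..1} u''"

definition solves_MO :: "nat \<Rightarrow> real \<Rightarrow> (real \<Rightarrow> real) \<Rightarrow> (real \<Rightarrow> real) \<Rightarrow> bool" where
  "solves_MO N lam f u \<longleftrightarrow>
     (\<exists>u' u''. C2_on_unit u u' u'' \<and>
        (\<forall>r. 0 < r \<and> r < 1 \<longrightarrow>
           ((\<lambda>s. (u' s) ^ N) has_real_derivative
              (lam ^ N * real N * r ^ (N - 1) * f (- u r))) (at r)) \<and>
        u' 0 = 0 \<and> u 1 = 0)"

end

theory Submission
  imports Defs "HOL-Complex_Analysis.Great_Picard"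
begin

(* 1. Reflection.  With f~(s) = (-1)^N f(-s), u solves (MO) for f~ iff -u solves it for f, and
      f~ satisfies the same hypotheses as f.  So it suffices to find positive concave solutions.
   2. Integral equation.  For g = f~, integrating ((u')^N)' = (-\<lambda>)^N N r^(N-1) g(u) twice
      turns the search for a positive solution into a fixed point problem
        u(r) = a - \<lambda> \<integral>_0^r (\<integral>_0^s N t^(N-1) g(u t) dt)^(1/N) ds,    u(1) = 0.
      Every continuous nonnegative such fixed point is C^2, solves (MO), is positive and
      strictly concave (locale regular_fixed_point).
   3. Existence of the fixed point.  Replace g by a bounded truncation G and the argument
      u(t) by the delayed argument u(t - h).  For h > 0 finitely many iterations give an exact
      fixed point (method of steps); shooting in the initial value a and the intermediate value
      theorem enforce u(1) = 0: f_\<infinity> = 0 makes large a overshoot, f_0 = \<infinity> makes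
      small a undershoot.  The delayed solutions are equi-Lipschitz, so Arzela-Ascoli yields a
      limit as h \<rightarrow> 0, which solves the undelayed equation (locale truncated_problem). *)

lemma integral_weight:
  fixes c k :: real and N :: nat
  assumes "0 \<le> c" "N \<ge> 1"
  shows "integral {0..c} (\<lambda>t. k * (real N * t^(N-1))) = k * c^N"
proof -
  have "((\<lambda>t. real N * t^(N-1)) has_integral (c^N - 0^N)) {0..c}"
    by (rule fundamental_theorem_of_calculus)
      (use assms in \<open>auto intro!: derivative_eq_intros
         simp: has_real_derivative_iff_has_vector_derivative[symmetric]\<close>)
  moreover have "(0::real)^N = 0" using assms by simp
  ultimately have "((\<lambda>t. real N * t^(N-1)) has_integral c^N) {0..c}" by simp
  then have "integral {0..c} (\<lambda>t. real N * t^(N-1)) = c^N" by (rule integral_unique)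
  then show ?thesis by (simp only: integral_mult_right)
qed

lemma integrable_subinterval:
  fixes F :: "real \<Rightarrow> real"
  assumes "continuous_on {0..1} F" "0 \<le> x" "y \<le> 1"
  shows "F integrable_on {x..y}"
  by (rule integrable_continuous_interval, rule continuous_on_subset[OF assms(1)])
    (use assms in auto)

lemma integral_increment:
  fixes F :: "real \<Rightarrow> real"
  assumes "continuous_on {0..1} F" "0 \<le> x" "x \<le> y" "y \<le> 1"
  shows "integral {0..y} F - integral {0..x} F = integral {x..y} F"
  using Henstock_Kurzweil_Integration.integral_combine[where a=0 and c=x and b=y and f=F] integrable_subinterval[OF assms(1), of 0 y] assms by simp

lemma integral_increment_lower:
  fixes F :: "real \<Rightarrow> real"
  assumes "continuous_on {0..1} F" "0 \<le> x" "x \<le> y" "y \<le> 1"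
    and "\<And>t. t \<in> {x..y} \<Longrightarrow> c \<le> F t"
  shows "c * (y - x) \<le> integral {0..y} F - integral {0..x} F"
proof -
  have "integral {x..y} (\<lambda>_. c) \<le> integral {x..y} F"
    by (rule integral_le) (use integrable_subinterval[OF assms(1)] assms in auto)
  then show ?thesis using integral_increment[OF assms(1-4)] assms by (simp add: mult.commute)
qed

lemma integral_increment_upper:
  fixes F :: "real \<Rightarrow> real"
  assumes "continuous_on {0..1} F" "0 \<le> x" "x \<le> y" "y \<le> 1"
    and "\<And>t. t \<in> {x..y} \<Longrightarrow> F t \<le> c"
  shows "integral {0..y} F - integral {0..x} F \<le> c * (y - x)"
proof -
  have "integral {x..y} F \<le> integral {x..y} (\<lambda>_. c)"
    by (rule integral_le) (use integrable_subinterval[OF assms(1)] assms in auto)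
  then show ?thesis using integral_increment[OF assms(1-4)] assms by (simp add: mult.commute)
qed

lemma integral_increment_mono:
  fixes F :: "real \<Rightarrow> real"
  assumes "continuous_on {0..1} F" "0 \<le> x" "x \<le> y" "y \<le> 1"
    and "\<And>t. t \<in> {x..y} \<Longrightarrow> 0 \<le> F t"
  shows "integral {0..x} F \<le> integral {0..y} F"
  using integral_increment_lower[OF assms, of] assms by simp

lemma indefinite_integral_continuous:
  fixes F :: "real \<Rightarrow> real"
  assumes "continuous_on {0..1} F"
  shows "continuous_on {0..1} (\<lambda>x. integral {0..x} F)"
  by (rule indefinite_integral_continuous_1) (rule integrable_continuous_interval[OF assms])

text \<open>For a nonnegative increasing integrand the integral over [0,1] dominates both twice the
  integral over [0,1/2] and half the value at 1/2; this drives the undershooting estimate.\<close>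
lemma integral_increasing_half:
  fixes F :: "real \<Rightarrow> real"
  assumes cont: "continuous_on {0..1} F" and nonneg: "\<And>s. s \<in> {0..1} \<Longrightarrow> 0 \<le> F s"
    and mono: "\<And>x y. 0 \<le> x \<Longrightarrow> x \<le> y \<Longrightarrow> y \<le> 1 \<Longrightarrow> F x \<le> F y"
  shows "2 * integral {0..1/2} F \<le> integral {0..1} F" "F (1/2) / 2 \<le> integral {0..1} F"
proof -
  have first_half: "integral {0..1/2} F - integral {0..0} F \<le> F (1/2) * (1/2 - 0)"
    by (rule integral_increment_upper[OF cont]) (use mono in auto)
  have second_half: "F (1/2) * (1 - 1/2) \<le> integral {0..1} F - integral {0..1/2} F"
    by (rule integral_increment_lower[OF cont]) (use mono in auto)
  have "0 \<le> integral {0..1/2} F"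
    by (rule integral_nonneg[OF integrable_subinterval[OF cont]]) (use nonneg in auto)
  then show "2 * integral {0..1/2} F \<le> integral {0..1} F" "F (1/2) / 2 \<le> integral {0..1} F"
    using first_half second_half by auto
qed

lemma weighted_integral_estimate:
  fixes \<phi> :: "real \<Rightarrow> real"
  assumes cont: "continuous_on {0..y} \<phi>" and y: "0 \<le> y" and N: "N \<ge> 1"
    and close: "\<And>t. t \<in> {0..y} \<Longrightarrow> \<bar>\<phi> t - c\<bar> \<le> e"
  shows "\<bar>integral {0..y} (\<lambda>t. real N * t^(N-1) * \<phi> t) - c * y^N\<bar> \<le> e * y^N"
proof -
  let ?w = "\<lambda>t. real N * t^(N-1)"
  have bounds: "(c - e) * ?w t \<le> ?w t * \<phi> t" "?w t * \<phi> t \<le> (c + e) * ?w t"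
    if "t \<in> {0..y}" for t
  proof -
    have "0 \<le> ?w t" "c - e \<le> \<phi> t" "\<phi> t \<le> c + e" using that close[OF that] by auto
    then show "(c - e) * ?w t \<le> ?w t * \<phi> t" "?w t * \<phi> t \<le> (c + e) * ?w t"
      by (auto simp: mult.commute intro: mult_right_mono)
  qed
  have int: "(\<lambda>t. ?w t * \<phi> t) integrable_on {0..y}"
    by (intro integrable_continuous_interval continuous_intros cont)
  have int_w: "(\<lambda>t. k * ?w t) integrable_on {0..y}" for k
    by (intro integrable_continuous_interval continuous_intros)
  have "(c - e) * y^N \<le> integral {0..y} (\<lambda>t. ?w t * \<phi> t)"
    using integral_le[OF int_w int bounds(1)] integral_weight[OF y N, of "c - e"] by linarith
  moreover have "integral {0..y} (\<lambda>t. ?w t * \<phi> t) \<le> (c + e) * y^N"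
    using integral_le[OF int int_w bounds(2)] integral_weight[OF y N, of "c + e"] by linarith
  ultimately show ?thesis by (simp add: abs_le_iff algebra_simps)
qed

section \<open>Compactness of equi-Lipschitz families\<close>

lemma lipschitz_family_convergent_subseq:
  fixes w :: "nat \<Rightarrow> real \<Rightarrow> real" and a :: "nat \<Rightarrow> real"
  assumes bound: "\<And>n t. t \<in> {0..1} \<Longrightarrow> \<bar>w n t\<bar> \<le> B"
    and lip: "\<And>n x y. x \<in> {0..1} \<Longrightarrow> y \<in> {0..1} \<Longrightarrow> \<bar>w n x - w n y\<bar> \<le> L * \<bar>x - y\<bar>"
    and L: "L \<ge> 0" and a: "\<And>n. a n \<in> {lo..hi}"
  obtains \<sigma> a0 u where "strict_mono \<sigma>" "(\<lambda>k. a (\<sigma> k)) \<longlonglongrightarrow> a0" "a0 \<in> {lo..hi}"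
    "continuous_on {0..1} u" "\<And>t. t \<in> {0..1} \<Longrightarrow> (\<lambda>k. w (\<sigma> k) t) \<longlonglongrightarrow> u t"
proof -
  obtain a0 \<sigma>1 where a0: "a0 \<in> {lo..hi}" "strict_mono \<sigma>1" "(a \<circ> \<sigma>1) \<longlonglongrightarrow> a0"
    using seq_compactE[OF compact_imp_seq_compact[OF compact_Icc], of a lo hi] a by blast
  have equicont: "\<exists>d>0. \<forall>n y. y \<in> {0..1} \<and> norm (x - y) < d \<longrightarrow>
      norm (w (\<sigma>1 n) x - w (\<sigma>1 n) y) < e" if "x \<in> {0..1}" "0 < e" for x e
  proof (intro exI[of _ "e / (L + 1)"] conjI allI impI)
    show "0 < e / (L + 1)" using that L by simp
    fix n y assume y: "y \<in> {0..1} \<and> norm (x - y) < e / (L + 1)"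
    have "L * \<bar>x - y\<bar> \<le> L * (e / (L + 1))" using y L by (intro mult_left_mono) auto
    also have "\<dots> < e" using that L by (simp add: field_simps)
    finally show "norm (w (\<sigma>1 n) x - w (\<sigma>1 n) y) < e"
      using lip[of x y "\<sigma>1 n"] that y by simp
  qed
  obtain u k where u: "continuous_on {0..1} u" "strict_mono (k :: nat \<Rightarrow> nat)"
    "\<And>e. 0 < e \<Longrightarrow> \<exists>N. \<forall>n x. n \<ge> N \<and> x \<in> {0..1} \<longrightarrow> norm (w (\<sigma>1 (k n)) x - u x) < e"
    by (rule Arzela_Ascoli[of "{0..1}" "\<lambda>n. w (\<sigma>1 n)" B]) (use bound equicont in auto)
  have "(\<lambda>n. w ((\<sigma>1 \<circ> k) n) t) \<longlonglongrightarrow> u t" if "t \<in> {0..1}" for t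
    unfolding LIMSEQ_iff using u(3) that by (metis comp_apply)
  moreover have "(\<lambda>n. a ((\<sigma>1 \<circ> k) n)) \<longlonglongrightarrow> a0"
    using LIMSEQ_subseq_LIMSEQ[OF a0(3) u(2)] by (simp add: o_def)
  moreover have "strict_mono (\<sigma>1 \<circ> k)" using a0(2) u(2) by (rule strict_mono_o)
  ultimately show ?thesis using that a0(1) u(1) by blast
qed


text \<open>Along an equi-Lipschitz sequence, pointwise convergence at t persists when the argument is
  shifted by amounts h_k \<longrightarrow> 0; used to remove the delay in the limit.\<close>
lemma lipschitz_shift_tendsto:
  fixes w :: "nat \<Rightarrow> real \<Rightarrow> real" and h :: "nat \<Rightarrow> real"
  assumes lip: "\<And>k x y. x \<in> {0..1} \<Longrightarrow> y \<in> {0..1} \<Longrightarrow> \<bar>w k x - w k y\<bar> \<le> L * \<bar>x - y\<bar>"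
    and L: "L \<ge> 0" and h: "\<And>k. 0 \<le> h k" "h \<longlonglongrightarrow> 0"
    and conv: "(\<lambda>k. w k t) \<longlonglongrightarrow> l" and t: "t \<in> {0..1}"
  shows "(\<lambda>k. w k (max (t - h k) 0)) \<longlonglongrightarrow> l"
proof -
  have "(\<lambda>k. w k (max (t - h k) 0) - w k t) \<longlonglongrightarrow> 0"
  proof (rule Lim_null_comparison[OF always_eventually])
    show "\<forall>k. norm (w k (max (t - h k) 0) - w k t) \<le> L * h k"
    proof
      fix k
      have m: "max (t - h k) 0 \<in> {0..1}" "\<bar>max (t - h k) 0 - t\<bar> \<le> h k" using t h(1)[of k] by auto
      have "\<bar>w k (max (t - h k) 0) - w k t\<bar> \<le> L * \<bar>max (t - h k) 0 - t\<bar>" by (rule lip[OF m(1) t])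
      also have "\<dots> \<le> L * h k" by (rule mult_left_mono[OF m(2) L])
      finally show "norm (w k (max (t - h k) 0) - w k t) \<le> L * h k" by simp
    qed
    show "(\<lambda>k. L * h k) \<longlonglongrightarrow> 0" using tendsto_mult_left[OF h(2), of L] by simp
  qed
  from tendsto_add[OF this conv] show ?thesis by simp
qed

section \<open>The delayed, truncated integral equation\<close>

text \<open>G is a bounded continuous nonnegative truncation of the nonlinearity.\<close>
locale truncated_problem =
  fixes N :: nat and lam M :: real and G :: "real \<Rightarrow> real"
  assumes N1: "N \<ge> 1" and lam: "lam > 0" and G_cont: "\<And>x. isCont G x"
    and G_nonneg: "\<And>x. 0 \<le> G x" and G_bound: "\<And>x. G x \<le> M"
begin

lemma M_nonneg: "0 \<le> M" using G_nonneg[of 0] G_bound[of 0] by linarith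

definition load :: "real \<Rightarrow> (real \<Rightarrow> real) \<Rightarrow> real \<Rightarrow> real" where
  "load h v t = real N * t^(N-1) * G (v (max (t-h) 0))"

definition flux :: "real \<Rightarrow> (real \<Rightarrow> real) \<Rightarrow> real \<Rightarrow> real" where
  "flux h v s = integral {0..s} (load h v)"

definition delayed_map :: "real \<Rightarrow> real \<Rightarrow> (real \<Rightarrow> real) \<Rightarrow> real \<Rightarrow> real" where
  "delayed_map a h v r = a - lam * integral {0..r} (\<lambda>s. root N (flux h v s))"

lemma load_cont:
  assumes "h \<ge> 0" "continuous_on {0..1} v"
  shows "continuous_on {0..1} (load h v)"
proof -
  have "continuous_on {0..1} (\<lambda>t. v (max (t-h) 0))"
    by (rule continuous_on_compose2[OF assms(2)]) (use assms in \<open>auto intro!: continuous_intros\<close>)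
  moreover have "continuous_on UNIV G" by (simp add: G_cont continuous_at_imp_continuous_on)
  ultimately have "continuous_on {0..1} (\<lambda>t. G (v (max (t-h) 0)))"
    using continuous_on_compose2[of UNIV G] by blast
  then show ?thesis unfolding load_def by (intro continuous_intros)
qed

lemma load_bounds:
  assumes "0 \<le> t"
  shows "0 \<le> load h v t" "load h v t \<le> M * (real N * t^(N-1))"
proof -
  show "0 \<le> load h v t" using assms G_nonneg by (simp add: load_def)
  have "0 \<le> real N * t^(N-1)" using assms by simp
  from mult_right_mono[OF G_bound this] show "load h v t \<le> M * (real N * t^(N-1))"
    by (simp add: load_def mult.commute)
qed

lemma flux_cont: "h \<ge> 0 \<Longrightarrow> continuous_on {0..1} v \<Longrightarrow> continuous_on {0..1} (flux h v)"
  unfolding flux_def[abs_def] by (rule indefinite_integral_continuous) (rule load_cont)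

lemma flux_mono:
  assumes "h \<ge> 0" "continuous_on {0..1} v" "0 \<le> x" "x \<le> y" "y \<le> 1"
  shows "flux h v x \<le> flux h v y"
  unfolding flux_def
  by (rule integral_increment_mono[OF load_cont[OF assms(1,2)]]) (use assms load_bounds in auto)

lemma flux_bounds:
  assumes "h \<ge> 0" "continuous_on {0..1} v" "s \<in> {0..1}"
  shows "0 \<le> flux h v s" "flux h v s \<le> M"
proof -
  show "0 \<le> flux h v s"
    using flux_mono[OF assms(1,2), of 0 s] assms by (simp add: flux_def)
  have "flux h v s \<le> integral {0..s} (\<lambda>t. M * (real N * t^(N-1)))"
    unfolding flux_def
    by (rule integral_le[OF integrable_subinterval[OF load_cont[OF assms(1,2)]]])
      (use assms load_bounds in \<open>auto intro!: integrable_continuous_interval continuous_intros\<close>)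
  also have "\<dots> = M * s^N" using integral_weight N1 assms by simp
  also have "\<dots> \<le> M" using assms M_nonneg by (simp add: mult_left_le power_le_one)
  finally show "flux h v s \<le> M" .
qed

lemma root_flux_cont:
  "h \<ge> 0 \<Longrightarrow> continuous_on {0..1} v \<Longrightarrow> continuous_on {0..1} (\<lambda>s. root N (flux h v s))"
  by (intro continuous_on_real_root flux_cont)

lemma root_flux_bounds:
  assumes "h \<ge> 0" "continuous_on {0..1} v" "s \<in> {0..1}"
  shows "0 \<le> root N (flux h v s)" "root N (flux h v s) \<le> root N M"
  using flux_bounds[OF assms] N1 by (auto simp: real_root_le_iff)

lemma delayed_map_cont:
  "h \<ge> 0 \<Longrightarrow> continuous_on {0..1} v \<Longrightarrow> continuous_on {0..1} (delayed_map a h v)"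
  unfolding delayed_map_def by (intro continuous_intros indefinite_integral_continuous root_flux_cont)

lemma delayed_map_increment:
  assumes "h \<ge> 0" "continuous_on {0..1} v" "0 \<le> x" "x \<le> y" "y \<le> 1"
  shows "0 \<le> delayed_map a h v x - delayed_map a h v y"
    "delayed_map a h v x - delayed_map a h v y \<le> lam * root N M * (y - x)"
proof -
  let ?I = "\<lambda>r. integral {0..r} (\<lambda>s. root N (flux h v s))"
  have "0 * (y - x) \<le> ?I y - ?I x"
    by (rule integral_increment_lower[OF root_flux_cont[OF assms(1,2)]])
      (use assms root_flux_bounds in auto)
  moreover have "?I y - ?I x \<le> root N M * (y - x)"
    by (rule integral_increment_upper[OF root_flux_cont[OF assms(1,2)]])
      (use assms root_flux_bounds in auto)
  moreover have "delayed_map a h v x - delayed_map a h v y = lam * (?I y - ?I x)"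
    unfolding delayed_map_def by (simp add: algebra_simps)
  ultimately show "0 \<le> delayed_map a h v x - delayed_map a h v y"
    "delayed_map a h v x - delayed_map a h v y \<le> lam * root N M * (y - x)"
    using lam mult_left_mono[of _ "root N M * (y - x)" lam] by (auto simp: mult.assoc)
qed

text \<open>The value at r only depends on v on [0, max (r-h) 0]: this makes the method of steps work.\<close>
lemma delayed_map_local:
  assumes "h \<ge> 0" "r \<in> {0..1}" "\<And>t. t \<in> {0..max (r-h) 0} \<Longrightarrow> v t = v' t"
  shows "delayed_map a h v r = delayed_map a h v' r"
proof -
  have "flux h v s = flux h v' s" if "s \<in> {0..r}" for s
    unfolding flux_def load_def by (rule integral_cong) (use that assms in auto)
  then show ?thesis unfolding delayed_map_def by (metis (no_types, lifting) integral_cong)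
qed

text \<open>Continuous dependence of delayed_map on initial value, delay and argument, by dominated
  convergence (everything is bounded since G is).\<close>
lemma delayed_map_tendsto:
  fixes hs as :: "nat \<Rightarrow> real" and vs :: "nat \<Rightarrow> real \<Rightarrow> real"
  assumes h: "h \<ge> 0" "\<And>j. hs j \<ge> 0"
    and vc: "continuous_on {0..1} v" "\<And>j. continuous_on {0..1} (vs j)"
    and conv: "\<And>t. t \<in> {0..1} \<Longrightarrow> (\<lambda>j. vs j (max (t - hs j) 0)) \<longlonglongrightarrow> v (max (t - h) 0)"
    and as: "as \<longlonglongrightarrow> a" and r: "r \<in> {0..1}"
  shows "(\<lambda>j. delayed_map (as j) (hs j) (vs j) r) \<longlonglongrightarrow> delayed_map a h v r"
proof -
  have flux_conv: "(\<lambda>j. flux (hs j) (vs j) s) \<longlonglongrightarrow> flux h v s" if s: "s \<in> {0..1}" for s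
    unfolding flux_def
  proof (rule dominated_convergence(2)[where h="\<lambda>_. M * real N"])
    show "load (hs j) (vs j) integrable_on {0..s}" for j
      by (rule integrable_subinterval[OF load_cont[OF h(2) vc(2)]]) (use s in auto)
    show "(\<lambda>_. M * real N) integrable_on {0..s}"
      by (intro integrable_continuous_interval continuous_intros)
    show "norm (load (hs j) (vs j) t) \<le> M * real N" if "t \<in> {0..s}" for j t
    proof -
      have "M * (real N * t^(N-1)) \<le> M * (real N * 1)"
        using that s M_nonneg by (intro mult_left_mono) (auto simp: power_le_one)
      then show ?thesis using load_bounds[of t "hs j" "vs j"] that by simp
    qed
    show "(\<lambda>j. load (hs j) (vs j) t) \<longlonglongrightarrow> load h v t" if "t \<in> {0..s}" for t
      unfolding load_def
      by (intro tendsto_mult_left isCont_tendsto_compose[OF G_cont] conv) (use that s in auto)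
  qed
  have "(\<lambda>j. integral {0..r} (\<lambda>s. root N (flux (hs j) (vs j) s)))
        \<longlonglongrightarrow> integral {0..r} (\<lambda>s. root N (flux h v s))"
  proof (rule dominated_convergence(2)[where h="\<lambda>_. root N M"])
    show "(\<lambda>s. root N (flux (hs j) (vs j) s)) integrable_on {0..r}" for j
      by (rule integrable_subinterval[OF root_flux_cont[OF h(2) vc(2)]]) (use r in auto)
    show "(\<lambda>_. root N M) integrable_on {0..r}"
      by (intro integrable_continuous_interval continuous_intros)
    show "norm (root N (flux (hs j) (vs j) s)) \<le> root N M" if "s \<in> {0..r}" for j s
      using root_flux_bounds[OF h(2) vc(2), of s j] that r by auto
    show "(\<lambda>j. root N (flux (hs j) (vs j) s)) \<longlonglongrightarrow> root N (flux h v s)" if "s \<in> {0..r}" for s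
      by (intro tendsto_real_root flux_conv) (use that r in auto)
  qed
  then show ?thesis unfolding delayed_map_def by (intro tendsto_intros as)
qed

lemma fixed_point_props:
  assumes h: "h \<ge> 0" and wc: "continuous_on {0..1} w"
    and fixed: "\<And>r. r \<in> {0..1} \<Longrightarrow> w r = delayed_map a h w r"
  shows "\<And>x y. 0 \<le> x \<Longrightarrow> x \<le> y \<Longrightarrow> y \<le> 1 \<Longrightarrow> w y \<le> w x"
    and "\<And>x y. x \<in> {0..1} \<Longrightarrow> y \<in> {0..1} \<Longrightarrow> \<bar>w x - w y\<bar> \<le> lam * root N M * \<bar>x - y\<bar>"
    and "\<And>t. t \<in> {0..1} \<Longrightarrow> a - lam * root N M \<le> w t \<and> w t \<le> a"
proof -
  note incr = delayed_map_increment[OF h wc]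
  show "w y \<le> w x" if "0 \<le> x" "x \<le> y" "y \<le> 1" for x y
    using incr(1)[OF that, of a] fixed[of x] fixed[of y] that by auto
  show "\<bar>w x - w y\<bar> \<le> lam * root N M * \<bar>x - y\<bar>" if "x \<in> {0..1}" "y \<in> {0..1}" for x y
    using incr[of x y a] incr[of y x a] fixed[OF that(1)] fixed[OF that(2)] that
    by (cases "x \<le> y") auto
  have w0: "w 0 = a" using fixed[of 0] by (simp add: delayed_map_def)
  show "a - lam * root N M \<le> w t \<and> w t \<le> a" if "t \<in> {0..1}" for t
  proof -
    have "lam * root N M * (t - 0) \<le> lam * root N M"
      using that lam M_nonneg N1 by (auto intro!: mult_left_le)
    then show ?thesis using incr[of 0 t a] fixed[of 0] fixed[OF that] that w0 by auto
  qed
qed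

lemma fixed_point_overshoot:
  assumes "h \<ge> 0" "continuous_on {0..1} w" "\<And>r. r \<in> {0..1} \<Longrightarrow> w r = delayed_map a h w r"
    and "lam * root N M < a"
  shows "0 < w 1"
  using fixed_point_props(3)[OF assms(1-3), of 1] assms(4) by auto

lemma fixed_point_flux_lower:
  assumes h: "h \<ge> 0" and wc: "continuous_on {0..1} w"
    and fixed: "\<And>r. r \<in> {0..1} \<Longrightarrow> w r = delayed_map \<alpha> h w r"
    and cG: "\<And>x. \<alpha>/2 < x \<Longrightarrow> x \<le> \<alpha> \<Longrightarrow> c \<le> G x" and high: "\<alpha>/2 < w (1/2)"
  shows "root N c / 2 \<le> root N (flux h w (1/2))"
proof -
  have "c * (real N * t^(N-1)) \<le> load h w t" if t: "t \<in> {0..1/2}" for t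
  proof -
    have m: "max (t-h) 0 \<in> {0..1}" "max (t-h) 0 \<le> 1/2"
      using t h by (auto simp: max_def)
    have "w (1/2) \<le> w (max (t-h) 0)"
      using fixed_point_props(1)[OF h wc fixed, of "max (t-h) 0" "1/2"] m t by auto
    moreover have "w (max (t-h) 0) \<le> \<alpha>"
      using fixed_point_props(3)[OF h wc fixed m(1)] by simp
    ultimately have "c \<le> G (w (max (t-h) 0))" using high cG by auto
    from mult_right_mono[OF this, of "real N * t^(N-1)"] t show ?thesis
      by (simp add: load_def mult.commute)
  qed
  then have "integral {0..1/2} (\<lambda>t. c * (real N * t^(N-1))) \<le> flux h w (1/2)"
    unfolding flux_def
    by (intro integral_le integrable_subinterval[OF load_cont[OF h wc]])
      (auto intro!: integrable_continuous_interval continuous_intros)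
  moreover have "integral {0..1/2} (\<lambda>t. c * (real N * t^(N-1))) = c * (1/2)^N"
    by (rule integral_weight) (use N1 in auto)
  ultimately have "c * (1/2)^N \<le> flux h w (1/2)" by linarith
  then have "root N (c * (1/2)^N) \<le> root N (flux h w (1/2))" using N1 by simp
  moreover have "root N (c * (1/2)^N) = root N c * (1/2)"
    using N1 by (simp add: real_root_mult real_root_power_cancel)
  ultimately show ?thesis by simp
qed

text \<open>Undershooting: if G \<ge> c on (\<alpha>/2, \<alpha>] and c is large relative to \<alpha>, a fixed point with
  initial value \<alpha> reaches 0 before r = 1.  Either w stays above \<alpha>/2 on [0,1/2], and then the
  flux is large, or it has already lost half its height on [0,1/2] and loses the rest on [1/2,1].\<close>
lemma fixed_point_undershoot:
  assumes h: "h \<ge> 0" and wc: "continuous_on {0..1} w"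
    and fixed: "\<And>r. r \<in> {0..1} \<Longrightarrow> w r = delayed_map \<alpha> h w r"
    and cG: "\<And>x. \<alpha>/2 < x \<Longrightarrow> x \<le> \<alpha> \<Longrightarrow> c \<le> G x"
    and big: "4 * \<alpha> \<le> lam * root N c"
  shows "w 1 \<le> 0"
proof -
  define R where "R s = root N (flux h w s)" for s
  define I where "I r = integral {0..r} R" for r
  have Rc: "continuous_on {0..1} R" unfolding R_def[abs_def] by (rule root_flux_cont[OF h wc])
  have wI: "w r = \<alpha> - lam * I r" if "r \<in> {0..1}" for r
    using fixed[OF that] by (simp add: delayed_map_def I_def R_def[abs_def])
  have Rmono: "R x \<le> R y" if "0 \<le> x" "x \<le> y" "y \<le> 1" for x y
    unfolding R_def using flux_mono[OF h wc that] N1 by (simp add: real_root_le_iff)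
  have Rnn: "0 \<le> R s" if "s \<in> {0..1}" for s unfolding R_def using root_flux_bounds[OF h wc that] by simp
  note halves = integral_increasing_half[OF Rc Rnn Rmono, folded I_def]
  show ?thesis
  proof (cases "w (1/2) > \<alpha>/2")
    case True
    then have "root N c / 4 \<le> I 1"
      using fixed_point_flux_lower[OF h wc fixed cG] halves(2) by (simp add: R_def)
    then have "lam * (root N c / 4) \<le> lam * I 1" using lam by (intro mult_left_mono) auto
    then show ?thesis using wI[of 1] big by simp
  next
    case False
    then have "\<alpha> \<le> 2 * (lam * I (1/2))" using wI[of "1/2"] by simp
    also have "\<dots> \<le> lam * I 1" using halves(1) lam mult_left_mono[of _ _ lam] by simp
    finally show ?thesis using wI[of 1] by simp
  qed
qed

subsection \<open>Exact delayed solutions by the method of steps\<close>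

primrec iterate :: "real \<Rightarrow> real \<Rightarrow> nat \<Rightarrow> real \<Rightarrow> real" where
  "iterate a h 0 = (\<lambda>_. a)"
| "iterate a h (Suc k) = delayed_map a h (iterate a h k)"

lemma iterate_cont: "h \<ge> 0 \<Longrightarrow> continuous_on {0..1} (iterate a h k)"
  by (induction k) (auto intro: delayed_map_cont)

text \<open>Since the delayed map only looks h units back, the iterates stabilise on [0, k h].\<close>
lemma iterate_stable:
  assumes "h > 0"
  shows "r \<in> {0..1} \<Longrightarrow> r \<le> real k * h \<Longrightarrow> iterate a h (Suc k) r = iterate a h k r"
proof (induction k arbitrary: r)
  case 0
  then show ?case by (simp add: delayed_map_def)
next
  case (Suc k)
  have "delayed_map a h (iterate a h (Suc k)) r = delayed_map a h (iterate a h k) r"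
  proof (rule delayed_map_local)
    show "h \<ge> 0" "r \<in> {0..1}" using assms Suc.prems by auto
    fix t assume t: "t \<in> {0..max (r - h) 0}"
    have "r - h \<le> real k * h" "0 \<le> real k * h" using Suc.prems assms by (simp_all add: algebra_simps)
    then have "t \<le> real k * h" using t by auto
    moreover have "t \<in> {0..1}" using t Suc.prems assms by auto
    ultimately show "iterate a h (Suc k) t = iterate a h k t" using Suc.IH by blast
  qed
  then show ?case by simp
qed

lemma iterate_fixed_point:
  assumes "h > 0" "1 \<le> real k * h" "r \<in> {0..1}"
  shows "iterate a h k r = delayed_map a h (iterate a h k) r"
  using iterate_stable[OF assms(1,3), of k a] assms by simp

lemma iterate_tendsto:
  assumes "h \<ge> 0" "as \<longlonglongrightarrow> a"
  shows "r \<in> {0..1} \<Longrightarrow> (\<lambda>j. iterate (as j) h k r) \<longlonglongrightarrow> iterate a h k r"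
proof (induction k arbitrary: r)
  case 0
  then show ?case using assms by simp
next
  case (Suc k)
  show ?case unfolding iterate.simps
    by (rule delayed_map_tendsto[where hs="\<lambda>_. h"]) (use assms Suc in \<open>auto intro: iterate_cont\<close>)
qed

text \<open>Shooting: the end value of the delayed solution depends continuously on the initial value,
  is \<le> 0 for the small value \<alpha> and > 0 for the large value A, so it vanishes in between.\<close>
lemma delayed_shooting:
  assumes h: "h > 0" and al: "0 < \<alpha>" "\<alpha> \<le> A" and hi: "lam * root N M < A"
    and c: "\<And>x. \<alpha>/2 < x \<Longrightarrow> x \<le> \<alpha> \<Longrightarrow> c \<le> G x" "4 * \<alpha> \<le> lam * root N c"
  shows "\<exists>a w. a \<in> {\<alpha>..A} \<and> continuous_on {0..1} w \<and>
           (\<forall>r\<in>{0..1}. w r = delayed_map a h w r) \<and> w 1 = 0"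
proof -
  define k where "k = nat \<lceil>1 / h\<rceil>"
  have "1 / h \<le> real k" unfolding k_def by linarith
  then have k: "1 \<le> real k * h" using h by (simp add: field_simps)
  note fixed = iterate_fixed_point[OF h k] and wc = iterate_cont[OF less_imp_le[OF h]]
  define S where "S a = iterate a h k 1" for a
  have "continuous_on {\<alpha>..A} S"
  proof (rule continuous_on_sequentiallyI)
    fix as :: "nat \<Rightarrow> real" and a assume "as \<longlonglongrightarrow> a"
    then show "(\<lambda>j. S (as j)) \<longlonglongrightarrow> S a"
      unfolding S_def by (intro iterate_tendsto) (use h in auto)
  qed
  moreover have "S \<alpha> \<le> 0"
    unfolding S_def by (rule fixed_point_undershoot[OF less_imp_le[OF h] wc fixed c])
  moreover have "0 \<le> S A"
    unfolding S_def using fixed_point_overshoot[OF less_imp_le[OF h] wc fixed hi] by simp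
  ultimately obtain a where "a \<in> {\<alpha>..A}" "S a = 0" using IVT'[of S \<alpha> 0 A] al by auto
  then show ?thesis using wc fixed unfolding S_def by blast
qed

lemma delayed_solutions_limit:
  fixes hs as :: "nat \<Rightarrow> real" and ws :: "nat \<Rightarrow> real \<Rightarrow> real"
  assumes hs: "\<And>n. 0 \<le> hs n" "hs \<longlonglongrightarrow> 0" and as: "\<And>n. as n \<in> {\<alpha>..A}"
    and wc: "\<And>n. continuous_on {0..1} (ws n)"
    and fixed: "\<And>n r. r \<in> {0..1} \<Longrightarrow> ws n r = delayed_map (as n) (hs n) (ws n) r"
    and end0: "\<And>n. ws n 1 = 0"
  obtains a u where "a \<in> {\<alpha>..A}" "continuous_on {0..1} u"
    "\<And>r. r \<in> {0..1} \<Longrightarrow> u r = delayed_map a 0 u r" "u 1 = 0"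
proof -
  define L where "L = lam * root N M"
  have L: "L \<ge> 0"
    unfolding L_def using lam M_nonneg by (intro mult_nonneg_nonneg real_root_ge_zero) auto
  have lip: "\<bar>ws n x - ws n y\<bar> \<le> L * \<bar>x - y\<bar>" if "x \<in> {0..1}" "y \<in> {0..1}" for n x y
    unfolding L_def by (rule fixed_point_props(2)[OF hs(1) wc]) (use fixed that in auto)
  have bound: "\<bar>ws n t\<bar> \<le> \<bar>\<alpha>\<bar> + \<bar>A\<bar> + L" if "t \<in> {0..1}" for n t
  proof -
    have "as n - L \<le> ws n t \<and> ws n t \<le> as n"
      unfolding L_def by (rule fixed_point_props(3)[OF hs(1) wc]) (use fixed that in auto)
    then show ?thesis using as[of n] L by (auto simp: abs_le_iff)
  qed
  obtain \<sigma> a u where \<sigma>: "strict_mono \<sigma>" "(\<lambda>k. as (\<sigma> k)) \<longlonglongrightarrow> a" "a \<in> {\<alpha>..A}"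
    and uc: "continuous_on {0..1} u"
    and conv: "\<And>t. t \<in> {0..1} \<Longrightarrow> (\<lambda>k. ws (\<sigma> k) t) \<longlonglongrightarrow> u t"
    by (rule lipschitz_family_convergent_subseq[where w=ws and a=as])
      (assumption | rule bound lip L as that)+
  have hs\<sigma>: "(\<lambda>k. hs (\<sigma> k)) \<longlonglongrightarrow> 0"
    using LIMSEQ_subseq_LIMSEQ[OF hs(2) \<sigma>(1)] by (simp add: o_def)
  have shifted: "(\<lambda>k. ws (\<sigma> k) (max (t - hs (\<sigma> k)) 0)) \<longlonglongrightarrow> u (max (t - 0) 0)"
    if t: "t \<in> {0..1}" for t
    using lipschitz_shift_tendsto[where w="\<lambda>k. ws (\<sigma> k)", OF _ L _ hs\<sigma> conv[OF t] t] lip hs(1) t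
    by simp
  have "u r = delayed_map a 0 u r" if r: "r \<in> {0..1}" for r
  proof -
    have "(\<lambda>k. delayed_map (as (\<sigma> k)) (hs (\<sigma> k)) (ws (\<sigma> k)) r) \<longlonglongrightarrow> delayed_map a 0 u r"
      by (rule delayed_map_tendsto[OF order_refl hs(1) uc wc shifted \<sigma>(2) r])
    then have "(\<lambda>k. ws (\<sigma> k) r) \<longlonglongrightarrow> delayed_map a 0 u r" using fixed[OF r] by simp
    then show ?thesis using conv[OF r] LIMSEQ_unique by metis
  qed
  moreover have "u 1 = 0"
    using conv[of 1] end0 LIMSEQ_unique[of "\<lambda>k. ws (\<sigma> k) 1"] by simp
  ultimately show ?thesis using that \<sigma>(3) uc by blast
qed

lemma truncated_solution:
  assumes al: "0 < \<alpha>" "\<alpha> \<le> A" and hi: "lam * root N M < A"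
    and c: "\<And>x. \<alpha>/2 < x \<Longrightarrow> x \<le> \<alpha> \<Longrightarrow> c \<le> G x" "4 * \<alpha> \<le> lam * root N c"
  obtains a u where "a \<in> {\<alpha>..A}" "continuous_on {0..1} u"
    "\<And>r. r \<in> {0..1} \<Longrightarrow> u r = delayed_map a 0 u r" "u 1 = 0"
    "\<And>t. t \<in> {0..1} \<Longrightarrow> 0 \<le> u t \<and> u t \<le> A"
proof -
  define hs :: "nat \<Rightarrow> real" where "hs n = inverse (real (Suc n))" for n
  have "\<forall>n. \<exists>a w. a \<in> {\<alpha>..A} \<and> continuous_on {0..1} w \<and>
           (\<forall>r\<in>{0..1}. w r = delayed_map a (hs n) w r) \<and> w 1 = 0"
    using delayed_shooting[OF _ al hi c] by (simp add: hs_def)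
  then obtain as ws where sol: "\<And>n. as n \<in> {\<alpha>..A}" "\<And>n. continuous_on {0..1} (ws n)"
    "\<And>n r. r \<in> {0..1} \<Longrightarrow> ws n r = delayed_map (as n) (hs n) (ws n) r" "\<And>n. ws n 1 = 0"
    by metis
  have hs_pos: "\<And>n. 0 \<le> hs n" and hs_lim: "hs \<longlonglongrightarrow> 0"
    unfolding hs_def by (simp, rule LIMSEQ_inverse_real_of_nat)
  obtain a u where au: "a \<in> {\<alpha>..A}" "continuous_on {0..1} u"
    "\<And>r. r \<in> {0..1} \<Longrightarrow> u r = delayed_map a 0 u r" "u 1 = 0"
    using delayed_solutions_limit[OF hs_pos hs_lim sol] by blast
  have "0 \<le> u t \<and> u t \<le> A" if t: "t \<in> {0..1}" for t
  proof -
    have "u 1 \<le> u t" by (rule fixed_point_props(1)[OF order_refl au(2)]) (use au(3) t in auto)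
    moreover have "u t \<le> a" using fixed_point_props(3)[OF order_refl au(2)] au(3) t by blast
    ultimately show ?thesis using au(1,4) by auto
  qed
  then show ?thesis using that au by blast
qed

end

section \<open>Reflection of the nonlinearity\<close>

text \<open>The nonlinearities admitted by the theorem: (f1) together with f_0 = +\<infinity> and f_\<infinity> = 0.\<close>
definition admissible_nonlinearity :: "nat \<Rightarrow> (real \<Rightarrow> real) \<Rightarrow> bool" where
  "admissible_nonlinearity N f \<longleftrightarrow> continuous_on UNIV f \<and> (\<forall>s. s \<noteq> 0 \<longrightarrow> f s * s ^ N > 0) \<and>
     filterlim (\<lambda>s. f s / s ^ N) at_top (at 0) \<and> ((\<lambda>s. f s / s ^ N) \<longlongrightarrow> 0) at_infinity"

text \<open>f~(s) = (-1)^N f(-s) exchanges positive and negative solutions of (MO).\<close>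
definition reflect_nl :: "nat \<Rightarrow> (real \<Rightarrow> real) \<Rightarrow> real \<Rightarrow> real" where
  "reflect_nl N f s = (-1)^N * f (- s)"

lemma neg_one_power_square: "(-1::real)^N * (-1)^N = 1"
  by (simp add: power_mult_distrib[symmetric])

lemma reflect_nl_involutive: "reflect_nl N (reflect_nl N f) = f"
  by (rule ext) (simp add: reflect_nl_def mult.assoc[symmetric] neg_one_power_square del: mult_minus_left)

lemma reflect_nl_ratio: "reflect_nl N f s / s ^ N = f (- s) / (- s) ^ N"
  by (cases "even N") (simp_all add: reflect_nl_def power_minus_odd)

lemma reflect_nl_scale: "lam ^ N * reflect_nl N f (- x) = (-lam) ^ N * f x"
  by (simp add: reflect_nl_def power_minus[of lam])

lemma admissible_reflect:
  assumes "admissible_nonlinearity N f"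
  shows "admissible_nonlinearity N (reflect_nl N f)"
proof -
  have cont: "continuous_on UNIV f" and sign: "\<And>s. s \<noteq> 0 \<Longrightarrow> f s * s ^ N > 0"
    and f0: "filterlim (\<lambda>s. f s / s ^ N) at_top (at 0)"
    and finf: "((\<lambda>s. f s / s ^ N) \<longlongrightarrow> 0) at_infinity"
    using assms by (auto simp: admissible_nonlinearity_def)
  have "continuous_on UNIV (reflect_nl N f)"
    unfolding reflect_nl_def[abs_def]
    by (intro continuous_intros continuous_on_compose2[OF cont]) auto
  moreover have "reflect_nl N f s * s ^ N > 0" if "s \<noteq> 0" for s
    using sign[of "- s"] that neg_one_power_square[of N]
    by (simp add: reflect_nl_def power_minus[of s] mult_ac)
  moreover have "filterlim (\<lambda>s. reflect_nl N f s / s ^ N) at_top (at 0)"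
  proof -
    have "filterlim (\<lambda>s. f s / s ^ N) at_top (filtermap (\<lambda>x. - x) (at (0::real)))"
      using f0 by (simp add: filtermap_at_minus)
    then show ?thesis unfolding reflect_nl_ratio filterlim_filtermap .
  qed
  moreover have "((\<lambda>s. reflect_nl N f s / s ^ N) \<longlongrightarrow> 0) at_infinity"
  proof -
    have "filterlim uminus at_infinity (at_infinity :: real filter)"
      unfolding filterlim_at_infinity_conv_norm_at_top
      using filterlim_norm_at_top[where 'a=real] by (simp add: real_norm_def[abs_def])
    from filterlim_compose[OF finf this] show ?thesis unfolding reflect_nl_ratio by simp
  qed
  ultimately show ?thesis by (simp add: admissible_nonlinearity_def)
qed

lemma solves_MO_reflect:
  assumes "solves_MO N lam (reflect_nl N f) v"
  shows "solves_MO N lam f (\<lambda>x. - v x)"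
proof -
  obtain v' v'' where C2: "C2_on_unit v v' v''"
    and ode: "\<And>r. 0 < r \<and> r < 1 \<Longrightarrow> ((\<lambda>s. (v' s) ^ N) has_real_derivative
               (lam ^ N * real N * r ^ (N - 1) * reflect_nl N f (- v r))) (at r)"
    and bc: "v' 0 = 0" "v 1 = 0"
    using assms unfolding solves_MO_def by blast
  have "C2_on_unit (\<lambda>x. - v x) (\<lambda>x. - v' x) (\<lambda>x. - v'' x)"
    using C2 unfolding C2_on_unit_def by (auto intro!: DERIV_minus continuous_on_minus)
  moreover have "((\<lambda>s. (- v' s) ^ N) has_real_derivative
      lam ^ N * real N * r ^ (N - 1) * f (- (- v r))) (at r)" if "0 < r \<and> r < 1" for r
  proof -
    have deriv_value: "(-1)^N * (lam ^ N * real N * r ^ (N - 1) * reflect_nl N f (- v r))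
        = lam ^ N * real N * r ^ (N - 1) * f (- (- v r))"
      using neg_one_power_square[of N] by (simp add: reflect_nl_def mult_ac)
    have power_eq: "(\<lambda>s. (-1)^N * (v' s)^N) = (\<lambda>s. (- v' s)^N)"
      by (rule ext) (rule power_minus[symmetric])
    show ?thesis using DERIV_cmult[OF ode[OF that], of "(-1)^N"] unfolding deriv_value power_eq .
  qed
  ultimately show ?thesis using bc unfolding solves_MO_def
    by (intro exI[of _ "\<lambda>x. - v' x"] exI[of _ "\<lambda>x. - v'' x"]) auto
qed

text \<open>Chord inequality: the mean value theorem on [x,z] and [z,y] gives slopes u'(\<xi>1) > u'(\<xi>2).\<close>
lemma strict_concavity_chord:
  fixes u u' :: "real \<Rightarrow> real"
  assumes d: "\<And>x. x\<in>{0<..<1} \<Longrightarrow> (u has_real_derivative u' x) (at x)"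
    and m: "\<And>x y. 0<x \<Longrightarrow> x<y \<Longrightarrow> y<1 \<Longrightarrow> u' y < u' x"
    and xy: "0 < x" "x < y" "y < 1" and t: "0 < t" "t < 1"
  shows "(1 - t) * u x + t * u y < u ((1 - t) * x + t * y)"
proof -
  define z where "z = (1 - t) * x + t * y"
  have zx: "z - x = t * (y - x)" "y - z = (1 - t) * (y - x)" by (simp_all add: z_def algebra_simps)
  have "0 < t * (y - x)" "0 < (1 - t) * (y - x)" using t xy by simp_all
  then have z1: "x < z" "z < y" using zx by (simp_all add: algebra_simps)
  have der: "DERIV u s :> u' s" if "x \<le> s" "s \<le> y" for s using d xy that by auto
  obtain \<xi>1 where \<xi>1: "x < \<xi>1" "\<xi>1 < z" "u z - u x = (z - x) * u' \<xi>1"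
    using MVT2[OF z1(1), of u u'] der z1 by (metis order.trans less_imp_le)
  obtain \<xi>2 where \<xi>2: "z < \<xi>2" "\<xi>2 < y" "u y - u z = (y - z) * u' \<xi>2"
    using MVT2[OF z1(2), of u u'] der z1 by (metis order.trans less_imp_le)
  have lt: "u' \<xi>2 < u' \<xi>1" using m[of \<xi>1 \<xi>2] \<xi>1 \<xi>2 xy by linarith
  have e1: "u x = u z - t * (y - x) * u' \<xi>1" using \<xi>1(3) zx(1) by simp
  have e2: "u y = u z + (1 - t) * (y - x) * u' \<xi>2" using \<xi>2(3) zx(2) by simp
  have "(1 - t) * u x + t * u y - u z = t * (1 - t) * (y - x) * (u' \<xi>2 - u' \<xi>1)"
    unfolding e1 e2 by (simp add: algebra_simps)
  moreover have "t * (1 - t) * (y - x) * (u' \<xi>2 - u' \<xi>1) < 0"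
    using t xy lt by (intro mult_pos_neg mult_pos_pos) auto
  ultimately show ?thesis unfolding z_def by linarith
qed

lemma strictly_concave_from_derivative:
  fixes u u' :: "real \<Rightarrow> real"
  assumes d: "\<And>x. x\<in>{0<..<1} \<Longrightarrow> (u has_real_derivative u' x) (at x)"
    and m: "\<And>x y. 0<x \<Longrightarrow> x<y \<Longrightarrow> y<1 \<Longrightarrow> u' y < u' x"
  shows "strictly_concave_on {0<..<1} u"
  unfolding strictly_concave_on_def strictly_convex_on_def
proof (intro conjI ballI allI impI)
  show "convex {0<..<1::real}" by (rule convex_real_interval)
  fix x y t :: real assume x: "x \<in> {0<..<1}" and y: "y \<in> {0<..<1}" and h: "x \<noteq> y \<and> 0 < t \<and> t < 1"
  show "- u ((1 - t) * x + t * y) < (1 - t) * - u x + t * - u y"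
  proof (cases "x < y")
    case True
    have "(1 - t) * u x + t * u y < u ((1 - t) * x + t * y)" using strict_concavity_chord[OF d m, of x y t] x y h True by auto
    then show ?thesis by linarith
  next
    case False
    then have "y < x" using h by auto
    then have "(1 - (1-t)) * u y + (1-t) * u x < u ((1 - (1-t)) * y + (1-t) * x)"
      using strict_concavity_chord[OF d m, of y x "1-t"] x y h by auto
    moreover have e: "(1 - (1-t)) * y + (1-t) * x = (1 - t) * x + t * y" by simp
    ultimately have "t * u y + (1-t) * u x < u ((1 - t) * x + t * y)" by (simp add: add.commute)
    then show ?thesis by linarith
  qed
qed

section \<open>Regularity of fixed points of the undelayed integral equation\<close>

locale regular_fixed_point =
  fixes N :: nat and lam a :: real and g u :: "real \<Rightarrow> real"
  assumes N1: "N \<ge> 1" and lam: "lam > 0" and a: "a > 0"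
    and gc: "\<And>x. isCont g x" and gpos: "\<And>x. x > 0 \<Longrightarrow> g x > 0"
    and g0: "\<And>x. x \<ge> 0 \<Longrightarrow> g x \<ge> 0"
    and uc: "continuous_on {0..1} u"
    and ufix: "\<And>r. r \<in> {0..1} \<Longrightarrow>
      u r = a - lam * integral {0..r} (\<lambda>s. root N (integral {0..s} (\<lambda>t. real N * t^(N-1) * g (u t))))"
    and u1: "u 1 = 0" and ung: "\<And>t. t \<in> {0..1} \<Longrightarrow> 0 \<le> u t"
begin

text \<open>The mass M(s) = \<integral>_0^s N t^(N-1) g(u t) dt, so that u' = -\<lambda> M^(1/N); the ratio
  M(s)/s^N (extended by g(a) at 0) is continuous and positive, which gives u''.\<close>
definition source :: "real \<Rightarrow> real" where "source t = real N * t^(N-1) * g (u t)"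
definition mass :: "real \<Rightarrow> real" where "mass s = integral {0..s} source"
definition mass_root :: "real \<Rightarrow> real" where "mass_root s = root N (mass s)"
definition mass_ratio :: "real \<Rightarrow> real" where
  "mass_ratio s = (if s = 0 then g a else mass s / s^N)"
definition du :: "real \<Rightarrow> real" where "du s = - lam * mass_root s"
definition ddu :: "real \<Rightarrow> real" where
  "ddu s = - lam * g (u s) / (root N (mass_ratio s))^(N-1)"

lemma u_0: "u 0 = a" using ufix[of 0] by simp

lemma g_u_cont: "continuous_on {0..1} (\<lambda>t. g (u t))"
  using continuous_on_compose2[OF continuous_at_imp_continuous_on[of UNIV g] uc] gc by auto

lemma source_cont: "continuous_on {0..1} source"
  unfolding source_def by (intro continuous_intros g_u_cont)

lemma source_nonneg: "t \<in> {0..1} \<Longrightarrow> 0 \<le> source t"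
  unfolding source_def using g0[OF ung] by simp

lemma mass_cont: "continuous_on {0..1} mass" unfolding mass_def by (rule indefinite_integral_continuous[OF source_cont])

lemma mass_deriv: "x \<in> {0..1} \<Longrightarrow> (mass has_real_derivative source x) (at x within {0..1})"
  unfolding mass_def by (rule integral_has_real_derivative[OF source_cont])

lemma mass_nonneg: "s \<in> {0..1} \<Longrightarrow> 0 \<le> mass s"
  unfolding mass_def by (rule integral_nonneg[OF integrable_subinterval[OF source_cont]]) (auto intro: source_nonneg)

lemma mass_mono: "0 \<le> x \<Longrightarrow> x \<le> y \<Longrightarrow> y \<le> 1 \<Longrightarrow> mass x \<le> mass y"
  unfolding mass_def by (rule integral_increment_mono[OF source_cont]) (auto intro: source_nonneg)

text \<open>Near 0, u is close to a, hence M(y) is close to g(a) y^N.\<close>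
lemma mass_approx:
  assumes e: "e > 0"
  shows "\<exists>d>0. \<forall>y. 0 < y \<and> y < d \<and> y \<le> 1 \<longrightarrow> \<bar>mass y - g a * y^N\<bar> \<le> e * y^N"
proof -
  have "continuous (at 0 within {0..1}) (\<lambda>t. g (u t))"
    using g_u_cont by (simp add: continuous_on_eq_continuous_within)
  then obtain d where d: "d > 0" "\<And>t. t \<in> {0..1} \<Longrightarrow> dist t 0 < d \<Longrightarrow> dist (g (u t)) (g (u 0)) < e"
    using e unfolding continuous_within_eps_delta by blast
  have "\<bar>mass y - g a * y^N\<bar> \<le> e * y^N" if y: "0 < y" "y < d" "y \<le> 1" for y
    unfolding mass_def source_def
  proof (rule weighted_integral_estimate)
    show "continuous_on {0..y} (\<lambda>t. g (u t))" by (rule continuous_on_subset[OF g_u_cont]) (use y in auto)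
    show "\<bar>g (u t) - g a\<bar> \<le> e" if "t \<in> {0..y}" for t
      using d(2)[of t] that y u_0 by (auto simp: dist_real_def)
  qed (use y N1 in auto)
  then show ?thesis using d(1) by blast
qed

lemma mass_ratio_tendsto: "((\<lambda>y. mass y / y^N) \<longlongrightarrow> g a) (at 0 within {0..1})"
  unfolding tendsto_iff eventually_at
proof (intro allI impI)
  fix e :: real assume e: "e > 0"
  obtain d where d: "d > 0" "\<And>y::real. 0 < y \<Longrightarrow> y < d \<Longrightarrow> y \<le> 1 \<Longrightarrow> \<bar>mass y - g a * y^N\<bar> \<le> (e/2) * y^N"
    using mass_approx[of "e/2"] e by auto
  show "\<exists>d>0. \<forall>x\<in>{0..1}. x \<noteq> 0 \<and> dist x 0 < d \<longrightarrow> dist (mass x / x ^ N) (g a) < e"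
  proof (intro exI[of _ d] conjI ballI impI)
    show "d > 0" by (rule d(1))
    fix y :: real assume y: "y \<in> {0..1}" "y \<noteq> 0 \<and> dist y 0 < d"
    then have yp: "0 < y" "y < d" "y \<le> 1" by auto
    have pN: "0 < y^N" using yp by simp
    have "mass y / y^N - g a = (mass y - g a * y^N) / y^N" using pN yp by (simp add: diff_divide_distrib)
    then have "\<bar>mass y / y^N - g a\<bar> = \<bar>mass y - g a * y^N\<bar> / y^N" using pN by simp
    also have "\<dots> \<le> (e/2) * y^N / y^N" using d(2)[OF yp] pN by (intro divide_right_mono) auto
    also have "\<dots> = e/2" using pN yp by simp
    finally show "dist (mass y / y ^ N) (g a) < e" using e by (simp add: dist_real_def)
  qed
qed

text \<open>Since g(a) > 0, the mass is positive on (0,1].\<close>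
lemma mass_pos: "0 < s \<Longrightarrow> s \<le> 1 \<Longrightarrow> 0 < mass s"
proof -
  assume s: "0 < s" "s \<le> 1"
  have ga: "g a > 0" using gpos a by simp
  obtain d where d: "d > 0" "\<And>y::real. 0 < y \<Longrightarrow> y < d \<Longrightarrow> y \<le> 1 \<Longrightarrow> \<bar>mass y - g a * y^N\<bar> \<le> (g a / 2) * y^N"
    using mass_approx[of "g a / 2"] ga by auto
  define y where "y = min s (d/2)"
  have yp: "0 < y" "y < d" "y \<le> 1" "y \<le> s" using s d by (auto simp: y_def)
  have "0 < (g a / 2) * y^N" using ga yp by simp
  also have "(g a / 2) * y^N \<le> mass y" using d(2)[OF yp(1-3)] unfolding abs_le_iff by linarith
  also have "mass y \<le> mass s" using mass_mono[of y s] yp s by simp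
  finally show ?thesis .
qed

lemma mass_ratio_pos: "s \<in> {0..1} \<Longrightarrow> 0 < mass_ratio s"
  using mass_pos[of s] gpos[OF a] by (auto simp: mass_ratio_def)

lemma mass_ratio_cont: "continuous_on {0..1} mass_ratio"
  unfolding continuous_on_eq_continuous_within
proof
  fix x :: real assume x: "x \<in> {0..1}"
  show "continuous (at x within {0..1}) mass_ratio"
    unfolding continuous_within
  proof (cases "x = 0")
    case True
    have "\<forall>\<^sub>F y in at 0 within {0..1}. mass y / y^N = mass_ratio y"
      unfolding eventually_at_filter by (auto simp: mass_ratio_def)
    from Lim_transform_eventually[OF mass_ratio_tendsto this] show "(mass_ratio \<longlongrightarrow> mass_ratio x) (at x within {0..1})"
      using True by (simp add: mass_ratio_def[of 0])
  next
    case False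
    then have xp: "x > 0" using x by auto
    have "(mass \<longlongrightarrow> mass x) (at x within {0..1})"
      using mass_cont x by (simp add: continuous_on_eq_continuous_within continuous_within)
    then have "((\<lambda>y. mass y / y^N) \<longlongrightarrow> mass x / x^N) (at x within {0..1})"
      using xp by (intro tendsto_intros) auto
    moreover have "\<forall>\<^sub>F y in at x within {0..1}. mass y / y^N = mass_ratio y"
      unfolding eventually_at
      by (rule exI[of _ x]) (auto simp: mass_ratio_def xp dist_real_def)
    ultimately show "(mass_ratio \<longlongrightarrow> mass_ratio x) (at x within {0..1})"
      using Lim_transform_eventually xp by (fastforce simp: mass_ratio_def)
  qed
qed

lemma N_pos: "0 < N" using N1 by simp

lemma mass_root_cont: "continuous_on {0..1} mass_root"
  unfolding mass_root_def[abs_def] by (intro continuous_on_real_root mass_cont)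

lemma mass_root_pos: "0 < s \<Longrightarrow> s \<le> 1 \<Longrightarrow> 0 < mass_root s"
  unfolding mass_root_def using mass_pos N_pos by (simp add: real_root_gt_zero)

lemma mass_root_0: "mass_root 0 = 0" by (simp add: mass_root_def mass_def)

lemma du_0: "du 0 = 0" by (simp add: du_def mass_root_0)

lemma u_eq: "r \<in> {0..1} \<Longrightarrow> u r = a - lam * integral {0..r} mass_root"
proof -
  assume r: "r \<in> {0..1}"
  have "(\<lambda>s. root N (integral {0..s} (\<lambda>t. real N * t^(N-1) * g (u t)))) = mass_root"
    by (rule ext) (simp add: mass_root_def mass_def source_def[abs_def])
  then show ?thesis using ufix[OF r] by simp
qed

lemma u_deriv: "x \<in> {0..1} \<Longrightarrow> (u has_real_derivative du x) (at x within {0..1})"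
proof -
  assume x: "x \<in> {0..1}"
  have der: "((\<lambda>r. a - lam * integral {0..r} mass_root) has_real_derivative (0 - lam * mass_root x)) (at x within {0..1})"
    by (intro DERIV_diff DERIV_const DERIV_cmult integral_has_real_derivative mass_root_cont x)
  have "\<And>y. y \<in> {0..1} \<Longrightarrow> dist y x < 1 \<Longrightarrow> (\<lambda>r. a - lam * integral {0..r} mass_root) y = u y"
    using u_eq by simp
  then have "(u has_real_derivative (0 - lam * mass_root x)) (at x within {0..1})"
    by (rule has_field_derivative_transform_within[OF der zero_less_one x])
  then show ?thesis by (simp add: du_def)
qed

lemma u_deriv_at: "z \<in> {0<..<1} \<Longrightarrow> (u has_real_derivative du z) (at z)"
  using u_deriv[of z] by (auto simp: at_within_Icc_at)

lemma root_mass_ratio: "0 < x \<Longrightarrow> root N (mass_ratio x) = mass_root x / x"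
proof -
  assume x: "0 < x"
  have "root N (x^N) = x" using N_pos x by (simp add: real_root_power_cancel)
  then show ?thesis using x by (simp add: mass_ratio_def mass_root_def real_root_divide)
qed

lemma ddu_0: "ddu 0 = - lam * root N (g a)"
proof -
  define r where "r = root N (g a)"
  have ga: "g a > 0" using gpos a by simp
  have rp: "r > 0" unfolding r_def using ga N_pos by (simp add: real_root_gt_zero)
  have e1: "r ^ N = g a" unfolding r_def using ga N_pos by simp
  obtain k where k: "N = Suc k" using N_pos not0_implies_Suc by blast
  have e3: "g a = r * r ^ (N-1)" using e1 by (simp add: k)
  have "r ^ (N-1) > 0" using rp by simp
  then have "g a / r^(N-1) = r" unfolding e3 by simp
  moreover have "ddu 0 = - lam * (g a / r^(N-1))" by (simp add: ddu_def mass_ratio_def u_0 r_def)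
  ultimately show ?thesis by (simp add: r_def)
qed

lemma du_deriv_pos:
  assumes x: "0 < x" "x \<le> 1"
  shows "(du has_real_derivative ddu x) (at x within {0..1})"
proof -
  have "0 < mass x" using mass_pos x by simp
  from DERIV_chain2[OF DERIV_real_root[OF N_pos this] mass_deriv]
  have "(mass_root has_real_derivative
      inverse (real N * root N (mass x) ^ (N - Suc 0)) * source x) (at x within {0..1})"
    using x unfolding mass_root_def[abs_def] by simp
  then have "(du has_real_derivative
      - lam * (inverse (real N * root N (mass x) ^ (N - Suc 0)) * source x)) (at x within {0..1})"
    unfolding du_def[abs_def] by (rule DERIV_cmult)
  moreover have "- lam * (inverse (real N * root N (mass x) ^ (N - Suc 0)) * source x) = ddu x"
  proof -
    have R: "mass_root x > 0" using mass_root_pos x by simp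
    have "ddu x = - lam * g (u x) / (mass_root x / x)^(N-1)" by (simp add: ddu_def root_mass_ratio x)
    also have "\<dots> = - lam * g (u x) * x^(N-1) / mass_root x^(N-1)" using R x by (simp add: power_divide)
    finally show ?thesis using R N_pos by (simp add: source_def mass_root_def field_simps)
  qed
  ultimately show ?thesis by simp
qed

text \<open>At 0 the difference quotient of u' is -\<lambda> (M(y)/y^N)^(1/N) \<longrightarrow> -\<lambda> g(a)^(1/N).\<close>
lemma du_deriv_0: "(du has_real_derivative ddu 0) (at 0 within {0..1})"
proof -
  have "((\<lambda>y. - lam * root N (mass y / y^N)) \<longlongrightarrow> - lam * root N (g a)) (at 0 within {0..1})"
    by (intro tendsto_intros mass_ratio_tendsto)
  moreover have "\<forall>\<^sub>F y in at 0 within {0..1}. - lam * root N (mass y / y^N) = (du y - du 0) / (y - 0)"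
    unfolding eventually_at_filter
  proof (rule always_eventually, intro allI impI)
    fix y :: real assume y: "y \<noteq> 0" "y \<in> {0..1}"
    then have "root N (mass y / y^N) = mass_root y / y"
      using root_mass_ratio[of y] by (simp add: mass_ratio_def)
    then show "- lam * root N (mass y / y^N) = (du y - du 0) / (y - 0)"
      by (simp add: du_def mass_root_0)
  qed
  ultimately have "((\<lambda>y. (du y - du 0) / (y - 0)) \<longlongrightarrow> ddu 0) (at 0 within {0..1})"
    using Lim_transform_eventually ddu_0 by fastforce
  then show ?thesis by (simp add: has_field_derivative_iff)
qed

lemma du_deriv: "x \<in> {0..1} \<Longrightarrow> (du has_real_derivative ddu x) (at x within {0..1})"
  using du_deriv_pos[of x] du_deriv_0 by (cases "x = 0") auto

lemma du_deriv_at: "z \<in> {0<..<1} \<Longrightarrow> (du has_real_derivative ddu z) (at z)"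
  using du_deriv[of z] by (auto simp: at_within_Icc_at)

lemma ddu_cont: "continuous_on {0..1} ddu"
proof -
  have nz: "root N (mass_ratio s)^(N-1) \<noteq> 0" if "s \<in> {0..1}" for s
  proof -
    have "0 < root N (mass_ratio s)" using mass_ratio_pos[OF that] N_pos by (simp add: real_root_gt_zero)
    then show ?thesis by simp
  qed
  show ?thesis unfolding ddu_def[abs_def]
    by (intro continuous_intros g_u_cont mass_ratio_cont) (use nz in auto)
qed

text \<open>(u')^N = (-\<lambda>)^N M, so differentiating M gives the equation (MO) in profile form.\<close>
lemma radial_ode: "0 < r \<Longrightarrow> r < 1 \<Longrightarrow> ((\<lambda>s. (du s)^N) has_real_derivative ((-lam)^N * real N * r^(N-1) * g (u r))) (at r)"
proof -
  assume r: "0 < r" "r < 1"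
  have "(mass has_real_derivative source r) (at r)" using mass_deriv[of r] r by (auto simp: at_within_Icc_at)
  then have "((\<lambda>s. (-lam)^N * mass s) has_real_derivative (-lam)^N * source r) (at r)" by (rule DERIV_cmult)
  then have "((\<lambda>s. (du s)^N) has_real_derivative (-lam)^N * source r) (at r)"
  proof (rule has_field_derivative_transform_within_open[where S="{0<..<1}"])
    show "open {0<..<1::real}" by simp
    show "r \<in> {0<..<1}" using r by simp
    fix s :: real assume s: "s \<in> {0<..<1}"
    have "0 \<le> mass s" using mass_nonneg s by simp
    then have rr: "root N (mass s)^N = mass s" using N_pos by simp
    have "(du s)^N = (-lam)^N * (root N (mass s))^N" unfolding du_def mass_root_def by (rule power_mult_distrib)
    then show "(-lam)^N * mass s = (du s)^N" using rr by simp
  qed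
  then show ?thesis by (simp add: source_def mult.assoc)
qed

text \<open>u is strictly decreasing on (0,1) and vanishes at 1, hence positive.\<close>
lemma u_pos: "r \<in> {0<..<1} \<Longrightarrow> 0 < u r"
proof -
  assume r: "r \<in> {0<..<1}"
  have "continuous_on {r..1} u" by (rule continuous_on_subset[OF uc]) (use r in auto)
  moreover have "u differentiable (at z)" if "r < z" "z < 1" for z
    using u_deriv_at[of z] that r real_differentiable_def by auto
  ultimately obtain l z where lz: "r < z" "z < 1" "DERIV u z :> l" "u 1 - u r = (1 - r) * l"
    using MVT[of r 1 u] r by auto
  have "l = du z" using DERIV_unique[OF lz(3) u_deriv_at[of z]] lz r by auto
  moreover have "du z < 0" using mass_root_pos[of z] lz r lam by (simp add: du_def)
  ultimately have "(1 - r) * l < 0" using r by (simp add: mult_pos_neg)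
  then show ?thesis using lz(4) u1 by simp
qed

lemma ddu_neg: "z \<in> {0<..<1} \<Longrightarrow> ddu z < 0"
proof -
  assume z: "z \<in> {0<..<1}"
  have "0 < g (u z)" using gpos u_pos[OF z] by simp
  moreover have "0 < root N (mass_ratio z) ^ (N-1)" using mass_ratio_pos[of z] z N_pos by (simp add: real_root_gt_zero)
  ultimately show ?thesis using lam by (simp add: ddu_def divide_neg_pos)
qed

text \<open>u'' < 0 on (0,1), so u' is strictly decreasing and u strictly concave.\<close>
lemma du_decreasing: "0 < x \<Longrightarrow> x < y \<Longrightarrow> y < 1 \<Longrightarrow> du y < du x"
proof -
  assume xy: "0 < x" "x < y" "y < 1"
  have der: "DERIV du s :> ddu s" if "x \<le> s" "s \<le> y" for s using du_deriv_at xy that by auto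
  obtain z where z: "x < z" "z < y" "du y - du x = (y - x) * ddu z"
    using MVT2[OF xy(2) der] by blast
  have "ddu z < 0" using ddu_neg z xy by simp
  then have "(y - x) * ddu z < 0" using xy by (simp add: mult_pos_neg)
  then show ?thesis using z by simp
qed

lemma solution_props:
  "solves_MO N lam (reflect_nl N g) u \<and> (\<forall>r\<in>{0<..<1}. u r > 0) \<and> strictly_concave_on {0<..<1} u"
proof (intro conjI)
  have "C2_on_unit u du ddu" unfolding C2_on_unit_def using u_deriv du_deriv ddu_cont by blast
  moreover have "((\<lambda>s. (du s)^N) has_real_derivative
      lam ^ N * real N * r ^ (N - 1) * reflect_nl N g (- u r)) (at r)" if "0 < r \<and> r < 1" for r
  proof -
    have "lam ^ N * real N * r ^ (N - 1) * reflect_nl N g (- u r)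
        = (real N * r ^ (N - 1)) * (lam ^ N * reflect_nl N g (- u r))" by (simp only: mult_ac)
    also have "\<dots> = (-lam) ^ N * real N * r ^ (N - 1) * g (u r)"
      by (simp only: reflect_nl_scale mult_ac)
    finally have eq: "lam ^ N * real N * r ^ (N - 1) * reflect_nl N g (- u r)
        = (-lam) ^ N * real N * r ^ (N - 1) * g (u r)" .
    show ?thesis unfolding eq using radial_ode[of r] that by simp
  qed
  ultimately show "solves_MO N lam (reflect_nl N g) u"
    unfolding solves_MO_def using du_0 u1 by blast
  show "\<forall>r\<in>{0<..<1}. u r > 0" using u_pos by blast
  show "strictly_concave_on {0<..<1} u"
    by (rule strictly_concave_from_derivative[OF u_deriv_at du_decreasing])
qed

end

section \<open>Existence of a positive solution\<close>

lemma admissible_positive_side: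
  assumes "admissible_nonlinearity N g"
  shows "\<And>x. isCont g x" "\<And>x. 0 < x \<Longrightarrow> 0 < g x" "\<And>x. 0 \<le> x \<Longrightarrow> 0 \<le> g x"
    "filterlim (\<lambda>x. g x / x ^ N) at_top (at_right 0)"
    "((\<lambda>x. g x / x ^ N) \<longlongrightarrow> 0) at_top"
proof -
  have cont: "continuous_on UNIV g" and sign: "\<And>s. s \<noteq> 0 \<Longrightarrow> g s * s ^ N > 0"
    and g0: "filterlim (\<lambda>s. g s / s ^ N) at_top (at 0)"
    and ginf: "((\<lambda>s. g s / s ^ N) \<longlongrightarrow> 0) at_infinity"
    using assms by (auto simp: admissible_nonlinearity_def)
  show gc: "isCont g x" for x using cont by (simp add: continuous_on_eq_continuous_at)
  show pos: "0 < g x" if "0 < x" for x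
  proof -
    have "0 < g x * x ^ N" "0 < x ^ N" using sign[of x] that by auto
    then show ?thesis by (rule zero_less_mult_pos2)
  qed
  show "0 \<le> g x" if "0 \<le> x" for x
  proof (cases "x = 0")
    case True
    have "(\<lambda>n. g (inverse (real (Suc n)))) \<longlonglongrightarrow> g 0"
      by (rule isCont_tendsto_compose[OF gc LIMSEQ_inverse_real_of_nat])
    moreover have "\<forall>n. 0 \<le> g (inverse (real (Suc n)))" by (intro allI less_imp_le pos) simp
    ultimately show ?thesis using True LIMSEQ_le_const by blast
  qed (use pos[of x] that in auto)
  show "filterlim (\<lambda>x. g x / x ^ N) at_top (at_right 0)" using g0 by (simp add: filterlim_at_split)
  show "((\<lambda>x. g x / x ^ N) \<longlongrightarrow> 0) at_top"
    by (rule filterlim_mono[OF ginf order_refl at_top_le_at_infinity])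
qed

text \<open>Since g(x)/x^N \<longrightarrow> 0 at \<infinity>, some amplitude A exceeds \<lambda> M^(1/N) for a bound M of g on
  [0,A]: initial values A overshoot.\<close>
lemma large_amplitude_bound:
  fixes g :: "real \<Rightarrow> real"
  assumes N: "N \<ge> 1" and lam: "lam > 0" and gc: "\<And>x. isCont g x"
    and ginf: "((\<lambda>x. g x / x ^ N) \<longlongrightarrow> 0) at_top"
  obtains A M where "0 < A" "lam * root N M < A" "\<And>x. x \<in> {0..A} \<Longrightarrow> g x \<le> M"
proof -
  define c :: real where "c = (1 / (2 * lam)) ^ N"
  have c: "c > 0" unfolding c_def using lam by simp
  have "eventually (\<lambda>x. g x / x ^ N < c) at_top" by (rule order_tendstoD(2)[OF ginf c])
  then obtain B where B: "\<And>x. x \<ge> B \<Longrightarrow> g x / x ^ N < c" by (auto simp: eventually_at_top_linorder)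
  define B' where "B' = max B 1"
  have "bounded (g ` {0..B'})"
    by (intro compact_imp_bounded compact_continuous_image continuous_at_imp_continuous_on)
      (auto simp: gc)
  then obtain C where C: "\<And>x. x \<in> {0..B'} \<Longrightarrow> g x \<le> C"
    unfolding bounded_real by (meson abs_le_D1 image_eqI)
  define A where "A = max B' (C / c + 1)"
  have A: "1 \<le> A" "B' \<le> A" "C / c + 1 \<le> A" by (auto simp: A_def B'_def)
  define M where "M = c * A ^ N"
  show thesis
  proof (rule that)
    show "0 < A" using A by simp
    have "root N M = root N c * A"
      unfolding M_def using A N by (simp add: real_root_mult real_root_power_cancel)
    also have "\<dots> = A / (2 * lam)" unfolding c_def using lam N by (simp add: real_root_power_cancel)
    finally show "lam * root N M < A" using lam A by (simp add: field_simps)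
    show "g x \<le> M" if x: "x \<in> {0..A}" for x
    proof (cases "x \<le> B'")
      case True
      have "C / c \<le> A" using A by simp
      then have "C \<le> c * A" using c by (simp add: divide_le_eq mult.commute)
      also have "\<dots> \<le> c * A ^ N" using A N c by (simp add: self_le_power)
      finally show ?thesis using C[of x] x True by (simp add: M_def)
    next
      case False
      then have "0 < x" "x \<ge> B" by (auto simp: B'_def)
      then have "g x \<le> c * x ^ N" using B[of x] by (simp add: divide_less_eq less_imp_le)
      also have "\<dots> \<le> c * A ^ N" using x c by (intro mult_left_mono power_mono) auto
      finally show ?thesis by (simp add: M_def)
    qed
  qed
qed

text \<open>Since g(x)/x^N \<longrightarrow> \<infinity> at 0+, a small amplitude \<alpha> has g \<ge> c on (\<alpha>/2, \<alpha>] with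
  4 \<alpha> \<le> \<lambda> c^(1/N): the initial value \<alpha> undershoots.\<close>
lemma small_amplitude_bound:
  fixes g :: "real \<Rightarrow> real"
  assumes N: "N \<ge> 1" and lam: "lam > 0" and A: "A > 0"
    and g0: "filterlim (\<lambda>x. g x / x ^ N) at_top (at_right 0)"
  obtains \<alpha> c where "0 < \<alpha>" "\<alpha> \<le> A" "\<And>x. \<alpha>/2 < x \<Longrightarrow> x \<le> \<alpha> \<Longrightarrow> c \<le> g x"
    "4 * \<alpha> \<le> lam * root N c"
proof -
  define K :: real where "K = (8 / lam) ^ N"
  have "eventually (\<lambda>x. K \<le> g x / x ^ N) (at_right 0)" using g0 by (simp add: filterlim_at_top)
  then obtain d where d: "d > 0" "\<And>x. 0 < x \<Longrightarrow> x < d \<Longrightarrow> K \<le> g x / x ^ N"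
    unfolding eventually_at_right_field by auto
  define \<alpha> where "\<alpha> = min (d / 2) A"
  have \<alpha>: "0 < \<alpha>" "\<alpha> \<le> A" "\<alpha> < d" using d A by (auto simp: \<alpha>_def)
  show thesis
  proof (rule that)
    show "0 < \<alpha>" "\<alpha> \<le> A" using \<alpha> by auto
    show "K * (\<alpha> / 2) ^ N \<le> g x" if x: "\<alpha>/2 < x" "x \<le> \<alpha>" for x
    proof -
      have "K * (\<alpha> / 2) ^ N \<le> K * x ^ N"
        unfolding K_def using lam x \<alpha> by (intro mult_left_mono power_mono) auto
      also have "\<dots> \<le> g x" using d(2)[of x] x \<alpha> by (simp add: pos_le_divide_eq)
      finally show ?thesis .
    qed
    have "root N (K * (\<alpha> / 2) ^ N) = 8 / lam * (\<alpha> / 2)"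
      unfolding K_def using lam \<alpha> N by (simp add: real_root_mult real_root_power_cancel)
    then show "4 * \<alpha> \<le> lam * root N (K * (\<alpha> / 2) ^ N)" using lam by simp
  qed
qed

text \<open>It is obtained from the truncated problem with G = g on [0,A];
  as the solution takes values in [0,A], the truncation is invisible.\<close>
lemma positive_profile_solution:
  assumes N: "N \<ge> 1" and lam: "lam > 0" and adm: "admissible_nonlinearity N g"
  shows "\<exists>u. solves_MO N lam (reflect_nl N g) u \<and> (\<forall>r\<in>{0<..<1}. u r > 0) \<and>
           strictly_concave_on {0<..<1} u"
proof -
  note g = admissible_positive_side[OF adm]
  obtain A M where AM: "0 < A" "lam * root N M < A" "\<And>x. x \<in> {0..A} \<Longrightarrow> g x \<le> M"
    using large_amplitude_bound[OF N lam g(1) g(5)] by blast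
  obtain \<alpha> c where \<alpha>c: "0 < \<alpha>" "\<alpha> \<le> A" "\<And>x. \<alpha>/2 < x \<Longrightarrow> x \<le> \<alpha> \<Longrightarrow> c \<le> g x"
    "4 * \<alpha> \<le> lam * root N c"
    using small_amplitude_bound[OF N lam AM(1) g(4)] by blast
  define G where "G x = g (max 0 (min x A))" for x
  have G_eq: "G x = g x" if "x \<in> {0..A}" for x using that by (simp add: G_def)
  interpret truncated_problem N lam M G
  proof
    show "isCont G x" for x unfolding G_def[abs_def] by (rule isCont_o2[OF _ g(1)]) (intro continuous_intros)
    show "0 \<le> G x" "G x \<le> M" for x unfolding G_def using g(3) AM by auto
  qed (use N lam in auto)
  have cG: "c \<le> G x" if "\<alpha>/2 < x" "x \<le> \<alpha>" for x
    using \<alpha>c(3)[OF that] \<alpha>c(1,2) G_eq[of x] that by auto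
  obtain a u where au: "a \<in> {\<alpha>..A}" "continuous_on {0..1} u"
      "\<And>r. r \<in> {0..1} \<Longrightarrow> u r = delayed_map a 0 u r" "u 1 = 0"
      "\<And>t. t \<in> {0..1} \<Longrightarrow> 0 \<le> u t \<and> u t \<le> A"
    by (rule truncated_solution[OF \<alpha>c(1,2) AM(2) _ \<alpha>c(4)]) (assumption | rule cG that)+
  have flux_eq: "flux 0 u s = integral {0..s} (\<lambda>t. real N * t^(N-1) * g (u t))"
    if "s \<in> {0..1}" for s
    unfolding flux_def load_def by (rule integral_cong) (use that au(5) G_eq in auto)
  have ufix: "u r = a - lam * integral {0..r}
      (\<lambda>s. root N (integral {0..s} (\<lambda>t. real N * t^(N-1) * g (u t))))" if r: "r \<in> {0..1}" for r
  proof -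
    have "integral {0..r} (\<lambda>s. root N (flux 0 u s))
        = integral {0..r} (\<lambda>s. root N (integral {0..s} (\<lambda>t. real N * t^(N-1) * g (u t))))"
      by (rule integral_cong) (use flux_eq r in auto)
    then show ?thesis using au(3)[OF r] by (simp add: delayed_map_def)
  qed
  have "0 < a" using au(1) \<alpha>c(1) by simp
  interpret regular_fixed_point N lam a g u
  proof
    show "\<And>r. r \<in> {0..1} \<Longrightarrow> u r = a - lam * integral {0..r}
      (\<lambda>s. root N (integral {0..s} (\<lambda>t. real N * t^(N-1) * g (u t))))" by (rule ufix)
  qed (use N lam g(1,2,3) au(2,4,5) \<open>0 < a\<close> in auto)
  show ?thesis using solution_props by blast
qed

theorem theorem4p7:
  fixes N :: nat and f :: "real \<Rightarrow> real" and lam :: real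
  assumes N: "N \<ge> 1"
    and f_cont: "continuous_on UNIV f"
    and f_sign: "\<And>s. s \<noteq> 0 \<Longrightarrow> f s * s ^ N > 0"
    and f0: "filterlim (\<lambda>s. f s / s ^ N) at_top (at 0)"
    and finf: "((\<lambda>s. f s / s ^ N) \<longlongrightarrow> 0) at_infinity"
    and lam: "lam > 0"
  shows "\<exists>up um.
           solves_MO N lam f up \<and> solves_MO N lam f um \<and>
           (\<forall>r\<in>{0<..<1}. up r > 0) \<and> strictly_concave_on {0<..<1} up \<and>
           (\<forall>r\<in>{0<..<1}. um r < 0) \<and> strictly_convex_on {0<..<1} um"
proof -
  have adm: "admissible_nonlinearity N f"
    using f_cont f_sign f0 finf by (simp add: admissible_nonlinearity_def)
  obtain up where up: "solves_MO N lam f up" "\<forall>r\<in>{0<..<1}. up r > 0"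
      "strictly_concave_on {0<..<1} up"
    using positive_profile_solution[OF N lam admissible_reflect[OF adm], unfolded reflect_nl_involutive]
    by blast
  obtain v where v: "solves_MO N lam (reflect_nl N f) v" "\<forall>r\<in>{0<..<1}. v r > 0"
      "strictly_concave_on {0<..<1} v"
    using positive_profile_solution[OF N lam adm] by blast
  have "solves_MO N lam f (\<lambda>x. - v x)" by (rule solves_MO_reflect[OF v(1)])
  moreover have "\<forall>r\<in>{0<..<1}. - v r < 0" using v(2) by simp
  moreover have "strictly_convex_on {0<..<1} (\<lambda>x. - v x)"
    using v(3) by (simp add: strictly_concave_on_def)
  ultimately show ?thesis using up by blast
qed

end
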